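(* Let $A,B,C$ be two-dimensional complex vector spaces. For nonnegative integers $n,a,b,c$, let $\mu(n;a,b,c)$ denote the multiplicity of the $GL(A)\times GL(B)\times GL(C)$-module $S_{n-a,a}A\otimes S_{n-b,b}B\otimes S_{n-c,c}C$ inside $S^n(A\otimes B\otimes C)$. Suppose $c\ge a$, $c\ge b$ and $2c\le n$. Then $$\mu(n;a,b,c)=\begin{cases}0 & \text{if } c>a+b,\\ E\!\left(\frac{a+b-c}{2}\right)+1 & \text{if } c\le a+b \text{ and } n\ge a+b+c,\\ E\!\left(\frac{a+b-c}{2}\right)-E^+\!\left(\frac{a+b+c-n}{2}\right)+1 & \text{if } c\le a+b \text{ and } n\le a+b+c.\end{cases}$$
   Context: $S_{p,q}$ denotes the Schur functor associated to the partition $(p,q)$, $p\ge q\ge 0$. For a real number $x$, $E(x)$ is the largest integer $\le x$ and $E^+(x)$ is the smallest integer $\ge x$. *)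

theory Defs
  imports Complex_Main "HOL-Library.Function_Algebras"
begin

text \<open>A, B, C are copies of C^2 with bases a_0,a_1 (resp. b, c), indices
  False (first basis vector) and True (second). S^n(A \<otimes> B \<otimes> C) is the space of
  homogeneous polynomials of degree n in the 8 variables x_ijk (i,j,k :: bool).
  A polynomial is its coefficient function on exponent vectors (monomials)
  m :: bool \<times> bool \<times> bool \<Rightarrow> nat.
  The multiplicity of the irreducible module S_{n-a,a}A \<otimes> S_{n-b,b}B \<otimes> S_{n-c,c}C
  is the dimension of its space of highest weight vectors, i.e. the polynomials of
  degree n and weight ((n-a,a),(n-b,b),(n-c,c)) killed by the three raising operators
  E_A = sum_{j,k} x_{0jk} d/dx_{1jk} (similarly for B, C).\<close>

type_synonym idx = "bool \<times> bool \<times> bool"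
type_synonym monomial = "idx \<Rightarrow> nat"
type_synonym cpoly = "monomial \<Rightarrow> complex"

definition deg :: "monomial \<Rightarrow> nat" where
  "deg m = (\<Sum>t\<in>UNIV. m t)"

text \<open>the second component of the weight in factor A, B, C respectively\<close>
definition wtA :: "monomial \<Rightarrow> nat" where
  "wtA m = (\<Sum>t\<in>{t. fst t}. m t)"
definition wtB :: "monomial \<Rightarrow> nat" where
  "wtB m = (\<Sum>t\<in>{t. fst (snd t)}. m t)"
definition wtC :: "monomial \<Rightarrow> nat" where
  "wtC m = (\<Sum>t\<in>{t. snd (snd t)}. m t)"

text \<open>Polarization operator x_s d/dx_t applied to a coefficient function:
  the monomial m' contributes m'(t) * p(m') to m' - e_t + e_s.\<close>
definition polar :: "idx \<Rightarrow> idx \<Rightarrow> cpoly \<Rightarrow> cpoly" where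
  "polar s t p = (\<lambda>m. let m' = m(s := m s - 1, t := m t + 1) in
      if 1 \<le> m s then of_nat (m' t) * p m' else 0)"

definition raiseA :: "cpoly \<Rightarrow> cpoly" where
  "raiseA p = (\<lambda>m. \<Sum>jk\<in>UNIV. polar (False, jk) (True, jk) p m)"
definition raiseB :: "cpoly \<Rightarrow> cpoly" where
  "raiseB p = (\<lambda>m. \<Sum>ik\<in>UNIV. polar (fst ik, False, snd ik) (fst ik, True, snd ik) p m)"
definition raiseC :: "cpoly \<Rightarrow> cpoly" where
  "raiseC p = (\<lambda>m. \<Sum>ij\<in>UNIV. polar (fst ij, snd ij, False) (fst ij, snd ij, True) p m)"

definition hwv :: "nat \<Rightarrow> nat \<Rightarrow> nat \<Rightarrow> nat \<Rightarrow> cpoly set" where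
  "hwv n a b c = {p. (\<forall>m. p m \<noteq> 0 \<longrightarrow> deg m = n \<and> wtA m = a \<and> wtB m = b \<and> wtC m = c)
                   \<and> (\<forall>m. raiseA p m = 0 \<and> raiseB p m = 0 \<and> raiseC p m = 0)}"

definition cscale :: "complex \<Rightarrow> cpoly \<Rightarrow> cpoly" where
  "cscale r p = (\<lambda>m. r * p m)"

definition mu :: "nat \<Rightarrow> nat \<Rightarrow> nat \<Rightarrow> nat \<Rightarrow> nat" where
  "mu n a b c = vector_space.dim cscale (hwv n a b c)"

end

(*
  Each factor GL_2 acts through an sl_2-triple: the raising operator E_d (raiseA, raiseB, raiseC),
  the lowering operator F_d, and H_d = [E_d, F_d], which acts on polynomials of degree n and
  weight w by the scalar n - 2 w_d. For the Fischer inner product F_d is the adjoint of E_d, so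
  <E_d F_d p, p> = |E_d p|^2 + (n - 2 w_d) |p|^2 and E_d F_d is injective when 2 w_d < n.
  Hence, if 2 w_d <= n, E_d maps the weight-w vectors killed by the raising operators of a set D
  of other factors onto the corresponding space of weight w - e_d, and rank-nullity gives
  dim (w, D + d) = dim (w, D) - dim (w - e_d, D). Three such steps turn mu(n;a,b,c) into a mixed
  third difference, in a, b and c, of the number of monomials of degree n and weight (a,b,c).
  Slicing the monomials along the third factor separates a from b in this count; after
  differencing, only the lattice points on two diagonal segments remain, and counting them gives
  the floor and ceiling formula.
*)
theory Submission
  imports Defs
begin

section \<open>Rank-nullity inside a finitely spanned subspace\<close>

context vector_space
begin

lemma dim_le_dim_of_subset_finite_span:
  assumes "S \<subseteq> T" "T \<subseteq> span W" "finite W"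
  shows "dim S \<le> dim T"
proof -
  obtain B where B: "B \<subseteq> T" "independent B" "T \<subseteq> span B" "card B = dim T"
    by (rule basis_exists)
  have "finite B"
    using independent_span_bound[OF assms(3) B(2)] B(1) assms(2) by auto
  then show ?thesis
    using dim_le_card[of S B] assms(1) B(3,4) by auto
qed

lemma span_inter_span_Diff_eq_0:
  assumes B: "independent B" "finite B" and "X \<subseteq> B"
    and y: "y \<in> span X" "y \<in> span (B - X)"
  shows "y = 0"
proof -
  have fX: "finite X" using B(2) \<open>X \<subseteq> B\<close> finite_subset by auto
  obtain u where u: "y = (\<Sum>v\<in>X. u v *s v)"
    using span_finite[OF fX] y(1) by auto
  obtain u' where u': "y = (\<Sum>v\<in>B - X. u' v *s v)"
    using span_finite[of "B - X"] B(2) y(2) by auto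
  define g where "g v = (if v \<in> X then u v else - u' v)" for v
  have "(\<Sum>v\<in>B. g v *s v) = (\<Sum>v\<in>X. g v *s v) + (\<Sum>v\<in>B - X. g v *s v)"
    using sum.subset_diff[OF \<open>X \<subseteq> B\<close> B(2)] by (simp add: add.commute)
  also have "(\<Sum>v\<in>X. g v *s v) = y"
    unfolding u by (intro sum.cong) (auto simp: g_def)
  also have "(\<Sum>v\<in>B - X. g v *s v) = (\<Sum>v\<in>B - X. - (u' v *s v))"
    by (intro sum.cong) (auto simp: g_def)
  also have "\<dots> = - y"
    unfolding u' by (rule sum_negf)
  finally have "g v = 0" if "v \<in> B" for v
    using independentD[OF B(1,2) subset_refl] that by simp
  then have "u' v = 0" if "v \<in> B - X" for v
    using that by (force simp: g_def)
  then show "y = 0" unfolding u' by simp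
qed

lemma inj_on_span_Diff_kernel_basis:
  assumes f: "Vector_Spaces.linear scale scale f" and S: "subspace S"
    and B: "independent B" "finite B" "B \<subseteq> S" "BK \<subseteq> B" "{x\<in>S. f x = 0} \<subseteq> span BK"
  shows "inj_on f (span (B - BK))"
proof -
  interpret f: Vector_Spaces.linear scale scale f by fact
  show ?thesis
    unfolding f.inj_on_iff_eq_0[OF subspace_span]
  proof (intro ballI impI)
    fix y assume y: "y \<in> span (B - BK)" "f y = 0"
    then have "y \<in> S"
      using span_mono[of "B - BK" B] span_minimal[OF B(3) S] by auto
    then have "y \<in> span BK" using y(2) B(5) by auto
    then show "y = 0"
      using span_inter_span_Diff_eq_0[OF B(1,2,4)] y(1) by simp
  qed
qed

lemma dim_kernel_add_dim_image:
  assumes f: "Vector_Spaces.linear scale scale f"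
    and S: "subspace S" "S \<subseteq> span W" "finite W"
  shows "dim {x\<in>S. f x = 0} + dim (f ` S) = dim S"
proof -
  interpret f: Vector_Spaces.linear scale scale f by fact
  let ?K = "{x\<in>S. f x = 0}"
  obtain BK where BK: "BK \<subseteq> ?K" "independent BK" "?K \<subseteq> span BK" "card BK = dim ?K"
    by (rule basis_exists)
  obtain B where B: "BK \<subseteq> B" "B \<subseteq> S" "independent B" "S \<subseteq> span B"
    using maximal_independent_subset_extend[of BK S] BK(1,2) by auto
  have fB: "finite B"
    using independent_span_bound[OF S(3) B(3)] B(2) S(2) by auto
  define C where "C = B - BK"
  have "C \<subseteq> B" by (auto simp: C_def)
  have inj: "inj_on f (span C)"
    unfolding C_def by (rule inj_on_span_Diff_kernel_basis[OF f S(1) B(3) fB B(2,1) BK(3)])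
  have "f ` S \<subseteq> span (f ` C)"
  proof
    fix z assume "z \<in> f ` S"
    then obtain x where x: "x \<in> S" "z = f x" by auto
    have "x \<in> span (BK \<union> C)" using x(1) B(1,4) by (metis C_def Un_Diff_cancel Un_absorb1 subsetD)
    then obtain y1 y2 where y: "x = y1 + y2" "y1 \<in> span BK" "y2 \<in> span C"
      unfolding span_Un by auto
    have "f y1 = 0"
      using y(2) span_minimal[OF BK(1)] S(1) by (auto simp: subspace_def f.add f.scale)
    then show "z \<in> span (f ` C)"
      using x y f.span_image by (auto simp: f.add)
  qed
  moreover have "independent (f ` C)"
    using f.independent_injective_image[OF independent_mono[OF B(3) \<open>C \<subseteq> B\<close>] inj] .
  moreover have "f ` C \<subseteq> f ` S" using B(2) \<open>C \<subseteq> B\<close> by auto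
  ultimately have "dim (f ` S) = card (f ` C)"
    using basis_card_eq_dim by simp
  also have "\<dots> = card B - card BK"
    using card_image[OF inj_on_subset[OF inj span_superset]] card_Diff_subset[OF finite_subset[OF B(1) fB] B(1)]
    by (simp add: C_def)
  finally show ?thesis
    using card_mono[OF fB B(1)] basis_card_eq_dim[OF B(2,4,3)] BK(4) by simp
qed

end

section \<open>Polarization operators\<close>

definition mul_var :: "'v \<Rightarrow> (('v \<Rightarrow> nat) \<Rightarrow> 'a::comm_ring_1) \<Rightarrow> ('v \<Rightarrow> nat) \<Rightarrow> 'a" where
  "mul_var s p = (\<lambda>m. if 1 \<le> m s then p (m(s := m s - 1)) else 0)"

definition diff_var :: "'v \<Rightarrow> (('v \<Rightarrow> nat) \<Rightarrow> 'a::comm_ring_1) \<Rightarrow> ('v \<Rightarrow> nat) \<Rightarrow> 'a" where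
  "diff_var t p = (\<lambda>m. of_nat (m t + 1) * p (m(t := m t + 1)))"

definition polarize :: "'v \<Rightarrow> 'v \<Rightarrow> (('v \<Rightarrow> nat) \<Rightarrow> 'a::comm_ring_1) \<Rightarrow> ('v \<Rightarrow> nat) \<Rightarrow> 'a" where
  "polarize s t p = mul_var s (diff_var t p)"

lemma mul_var_commute: "mul_var s (mul_var u p) = mul_var u (mul_var s p)"
  by (cases "s = u") (auto simp: mul_var_def fun_eq_iff fun_upd_twist)

lemma diff_var_commute: "diff_var s (diff_var u p) = diff_var u (diff_var s p)"
  by (cases "s = u") (auto simp: diff_var_def fun_eq_iff fun_upd_twist ac_simps)

lemma diff_mul_var: "s \<noteq> t \<Longrightarrow> diff_var t (mul_var s p) = mul_var s (diff_var t p)"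
  by (auto simp: mul_var_def diff_var_def fun_eq_iff fun_upd_twist)

lemma diff_mul_var_same: "diff_var t (mul_var t p) = mul_var t (diff_var t p) + p"
proof (rule ext)
  fix m
  show "diff_var t (mul_var t p) m = (mul_var t (diff_var t p) + p) m"
    by (cases "m t") (auto simp: mul_var_def diff_var_def algebra_simps fun_upd_idem)
qed

lemma mul_var_add: "mul_var s (p + q) = mul_var s p + mul_var s q"
  by (auto simp: mul_var_def fun_eq_iff)

lemma diff_var_add: "diff_var s (p + q) = diff_var s p + diff_var s q"
  by (auto simp: diff_var_def fun_eq_iff algebra_simps)

lemma polarize_add: "polarize s t (p + q) = polarize s t p + polarize s t q"
  by (simp add: polarize_def mul_var_add diff_var_add)

lemma polarize_polarize:
  "polarize s t (polarize u v p)
     = mul_var s (mul_var u (diff_var t (diff_var v p))) + (if t = u then polarize s v p else 0)"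
  by (cases "t = u") (simp_all add: polarize_def diff_mul_var diff_mul_var_same mul_var_add)

lemma polarize_commutator:
  fixes p :: "('v \<Rightarrow> nat) \<Rightarrow> 'a::comm_ring_1"
  shows "polarize s t (polarize u v p) = polarize u v (polarize s t p)
           + (if t = u then polarize s v p else 0) - (if v = s then polarize u t p else 0)"
  using polarize_polarize[of s t u v p] polarize_polarize[of u v s t p]
  by (simp add: mul_var_commute[of s u] diff_var_commute[of t v])

lemma polarize_same: "polarize s s p m = of_nat (m s) * p m"
  by (cases "m s") (auto simp: polarize_def mul_var_def diff_var_def fun_upd_idem)

lemma polarize_apply:
  "s \<noteq> t \<Longrightarrow> polarize s t p m =
     (if 1 \<le> m s then of_nat (m t + 1) * p (m(s := m s - 1, t := m t + 1)) else 0)"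
  by (simp add: polarize_def mul_var_def diff_var_def)

lemma polar_eq_polarize: "s \<noteq> t \<Longrightarrow> polar s t = polarize s t"
  by (auto simp: polar_def Let_def polarize_apply fun_eq_iff)

lemma polarize_sum: "polarize s t (\<lambda>m. \<Sum>i\<in>I. g i m) m = (\<Sum>i\<in>I. polarize s t (g i) m)"
  by (simp add: polarize_def mul_var_def diff_var_def sum_distrib_left)

lemma polarize_cscale: "polarize s t (cscale c p) = cscale c (polarize s t p)"
  by (auto simp: polarize_def mul_var_def diff_var_def cscale_def fun_eq_iff)

definition polar_sum ::
  "('r::finite \<Rightarrow> 'v) \<Rightarrow> ('r \<Rightarrow> 'v) \<Rightarrow> (('v \<Rightarrow> nat) \<Rightarrow> 'a::comm_ring_1) \<Rightarrow> ('v \<Rightarrow> nat) \<Rightarrow> 'a" where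
  "polar_sum f g p = (\<lambda>m. \<Sum>r\<in>UNIV. polarize (f r) (g r) p m)"

lemma polar_sum_commutator:
  fixes p :: "('v \<Rightarrow> nat) \<Rightarrow> 'a::comm_ring_1"
  shows "polar_sum f g (polar_sum f' g' p) m = polar_sum f' g' (polar_sum f g p) m
     + (\<Sum>r\<in>UNIV. \<Sum>r'\<in>UNIV. if g r = f' r' then polarize (f r) (g' r') p m else 0)
     - (\<Sum>r\<in>UNIV. \<Sum>r'\<in>UNIV. if g' r' = f r then polarize (f' r') (g r) p m else 0)"
proof -
  have commute: "polarize (f r) (g r) (polarize (f' r') (g' r') p) m
      = polarize (f' r') (g' r') (polarize (f r) (g r) p) m
       + (if g r = f' r' then polarize (f r) (g' r') p m else 0)
       - (if g' r' = f r then polarize (f' r') (g r) p m else 0)" for r r'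
    using fun_cong[OF polarize_commutator[of "f r" "g r" "f' r'" "g' r'" p], of m]
    by (simp split: if_split)
  have swap: "polar_sum f' g' (polar_sum f g p) m
      = (\<Sum>r\<in>UNIV. \<Sum>r'\<in>UNIV. polarize (f' r') (g' r') (polarize (f r) (g r) p) m)"
    unfolding polar_sum_def polarize_sum by (rule sum.swap)
  have "polar_sum f g (polar_sum f' g' p) m
      = (\<Sum>r\<in>UNIV. \<Sum>r'\<in>UNIV. polarize (f r) (g r) (polarize (f' r') (g' r') p) m)"
    by (simp add: polar_sum_def polarize_sum)
  also have "\<dots> = (\<Sum>r\<in>UNIV. \<Sum>r'\<in>UNIV. polarize (f' r') (g' r') (polarize (f r) (g r) p) m
       + (if g r = f' r' then polarize (f r) (g' r') p m else 0)
       - (if g' r' = f r then polarize (f' r') (g r) p m else 0))"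
    by (intro sum.cong refl) (rule commute)
  finally show ?thesis
    unfolding swap by (simp add: sum.distrib sum_subtractf)
qed

lemma polar_sum_add: "polar_sum f g (p + q) = polar_sum f g p + polar_sum f g q"
  by (simp add: polar_sum_def polarize_add sum.distrib fun_eq_iff)

lemma polar_sum_cscale: "polar_sum f g (cscale c p) = cscale c (polar_sum f g p)"
  by (simp add: polar_sum_def polarize_cscale fun_eq_iff) (simp add: cscale_def sum_distrib_left)

lemma polar_sum_zero: "polar_sum f g 0 = 0"
  by (simp add: polar_sum_def polarize_def mul_var_def diff_var_def zero_fun_def)

interpretation cs: vector_space cscale
  by unfold_locales (auto simp: cscale_def fun_eq_iff algebra_simps)

lemma linear_polar_sum: "Vector_Spaces.linear cscale cscale (polar_sum f g)"
  unfolding Vector_Spaces.linear_iff using cs.vector_space_axioms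
  by (auto simp: polar_sum_add polar_sum_cscale)

section \<open>The three sl_2-triples\<close>

datatype factor = FA | FB | FC

lemma factor_UNIV: "(UNIV :: factor set) = {FA, FB, FC}"
  using factor.exhaust by auto

lemma all_factor: "(\<forall>d. P d) \<longleftrightarrow> P FA \<and> P FB \<and> P FC"
  by (metis factor.exhaust)

fun coord :: "factor \<Rightarrow> idx \<Rightarrow> bool" where
  "coord FA t = fst t"
| "coord FB t = fst (snd t)"
| "coord FC t = snd (snd t)"

fun low :: "factor \<Rightarrow> bool \<times> bool \<Rightarrow> idx" where
  "low FA r = (False, fst r, snd r)"
| "low FB r = (fst r, False, snd r)"
| "low FC r = (fst r, snd r, False)"

fun high :: "factor \<Rightarrow> bool \<times> bool \<Rightarrow> idx" where
  "high FA r = (True, fst r, snd r)"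
| "high FB r = (fst r, True, snd r)"
| "high FC r = (fst r, snd r, True)"

lemma coord_low_high:
  "coord d (low d r) = False" "coord d (high d r) = True"
  "d' \<noteq> d \<Longrightarrow> coord d' (low d r) = coord d' (high d r)" "low d r \<noteq> high d r"
  by (cases d; cases d'; auto)+

abbreviation raising :: "factor \<Rightarrow> cpoly \<Rightarrow> cpoly" where
  "raising d \<equiv> polar_sum (low d) (high d)"

abbreviation lowering :: "factor \<Rightarrow> cpoly \<Rightarrow> cpoly" where
  "lowering d \<equiv> polar_sum (high d) (low d)"

definition weight :: "factor \<Rightarrow> monomial \<Rightarrow> nat" where
  "weight d m = (\<Sum>t | coord d t. m t)"

lemma UNIV_bool_pair: "(UNIV :: (bool \<times> bool) set) = {(False,False), (False,True), (True,False), (True,True)}"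
  by (auto simp: UNIV_bool)

lemma deg_expand:
  "deg m = m (False,False,False) + m (False,False,True) + m (False,True,False) + m (False,True,True)
     + m (True,False,False) + m (True,False,True) + m (True,True,False) + m (True,True,True)"
proof -
  have U: "(UNIV :: idx set) = {(False,False,False), (False,False,True), (False,True,False), (False,True,True),
      (True,False,False), (True,False,True), (True,True,False), (True,True,True)}"
    by (auto simp: UNIV_bool)
  show ?thesis unfolding deg_def U by simp
qed

lemma weight_expand:
  "weight FA m = m (True,False,False) + m (True,False,True) + m (True,True,False) + m (True,True,True)"
  "weight FB m = m (False,True,False) + m (False,True,True) + m (True,True,False) + m (True,True,True)"
  "weight FC m = m (False,False,True) + m (False,True,True) + m (True,False,True) + m (True,True,True)"
proof -
  have "{t. coord FA t} = {(True,False,False), (True,False,True), (True,True,False), (True,True,True)}"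
    "{t. coord FB t} = {(False,True,False), (False,True,True), (True,True,False), (True,True,True)}"
    "{t. coord FC t} = {(False,False,True), (False,True,True), (True,False,True), (True,True,True)}"
    by (auto simp: UNIV_bool)
  then show
    "weight FA m = m (True,False,False) + m (True,False,True) + m (True,True,False) + m (True,True,True)"
    "weight FB m = m (False,True,False) + m (False,True,True) + m (True,True,False) + m (True,True,True)"
    "weight FC m = m (False,False,True) + m (False,True,True) + m (True,False,True) + m (True,True,True)"
    by (simp_all add: weight_def)
qed

lemma raising_commute: "d \<noteq> d' \<Longrightarrow> raising d (raising d' p) = raising d' (raising d p)"
proof (rule ext)
  fix m assume "d \<noteq> d'"
  then have "(\<Sum>r\<in>UNIV. \<Sum>r'\<in>UNIV. if high d r = low d' r' then polarize (low d r) (high d' r') p m else 0)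
     = (\<Sum>r\<in>UNIV. \<Sum>r'\<in>UNIV. if high d' r' = low d r then polarize (low d' r') (high d r) p m else 0)"
    by (cases d; cases d'; simp add: UNIV_bool_pair)
  then show "raising d (raising d' p) m = raising d' (raising d p) m"
    by (simp add: polar_sum_commutator[of "low d" "high d" "low d'" "high d'" p m])
qed

lemma raising_lowering_commute: "d \<noteq> d' \<Longrightarrow> raising d' (lowering d p) = lowering d (raising d' p)"
proof (rule ext)
  fix m assume "d \<noteq> d'"
  then have "(\<Sum>r\<in>UNIV. \<Sum>r'\<in>UNIV. if high d' r = high d r' then polarize (low d' r) (low d r') p m else 0)
     = (\<Sum>r\<in>UNIV. \<Sum>r'\<in>UNIV. if low d r' = low d' r then polarize (high d r') (high d' r) p m else 0)"
    by (cases d; cases d'; simp add: UNIV_bool_pair)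
  then show "raising d' (lowering d p) m = lowering d (raising d' p) m"
    by (simp add: polar_sum_commutator[of "low d'" "high d'" "high d" "low d" p m])
qed

lemma raising_lowering_apply:
  "raising d (lowering d p) m
     = lowering d (raising d p) m + of_int (int (deg m) - 2 * int (weight d m)) * p m"
proof -
  have "(\<Sum>r\<in>UNIV. \<Sum>r'\<in>UNIV. if high d r = high d r' then polarize (low d r) (low d r') p m else 0)
     - (\<Sum>r\<in>UNIV. \<Sum>r'\<in>UNIV. if low d r' = low d r then polarize (high d r') (high d r) p m else 0)
     = of_int (int (deg m) - 2 * int (weight d m)) * p m"
    by (cases d; simp add: UNIV_bool_pair polarize_same deg_expand weight_expand algebra_simps)
  then show ?thesis
    by (simp add: polar_sum_commutator[of "low d" "high d" "high d" "low d" p m])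
qed

section \<open>Weight spaces and partial highest weight vectors\<close>

lemma sum_fun_upd_add:
  fixes f :: "'v \<Rightarrow> 'a::comm_monoid_add"
  assumes "finite S"
  shows "sum (f(x := y)) S + (if x \<in> S then f x else 0) = sum f S + (if x \<in> S then y else 0)"
proof (cases "x \<in> S")
  case True
  have "sum (f(x := y)) (S - {x}) = sum f (S - {x})"
    by (rule sum.cong) auto
  then have "sum (f(x := y)) S = y + sum f (S - {x})"
    using sum.remove[OF assms True, of "f(x := y)"] by simp
  moreover have "sum f S = f x + sum f (S - {x})"
    using sum.remove[OF assms True] .
  ultimately show ?thesis using True by (simp add: ac_simps)
next
  case False
  then have "sum (f(x := y)) S = sum f S" by (intro sum.cong) auto
  then show ?thesis using False by simp
qed

lemma sum_shift:
  fixes m :: "'v \<Rightarrow> nat"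
  assumes "finite S" "s \<noteq> t" "1 \<le> m s"
  shows "sum (m(s := m s - 1, t := m t + 1)) S + of_bool (s \<in> S) = sum m S + of_bool (t \<in> S)"
proof -
  define m1 where "m1 = m(s := m s - 1)"
  have "m1 t = m t" using assms(2) by (simp add: m1_def)
  note A = sum_fun_upd_add[OF assms(1), of m1 t "m t + 1", unfolded \<open>m1 t = m t\<close>]
  note B = sum_fun_upd_add[OF assms(1), of m s "m s - 1", folded m1_def]
  show ?thesis
    unfolding m1_def[symmetric] using A B assms(3)
    by (cases "s \<in> S"; cases "t \<in> S"; simp only: if_True if_False of_bool_eq; arith)
qed

lemma polar_sum_support:
  assumes "\<And>r. f r \<noteq> g r" and "polar_sum f g p m \<noteq> 0"
  obtains r where "1 \<le> m (f r)" "p (m(f r := m (f r) - 1, g r := m (g r) + 1)) \<noteq> 0"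
proof -
  obtain r where "polarize (f r) (g r) p m \<noteq> 0"
    using assms(2) unfolding polar_sum_def by (meson sum.not_neutral_contains_not_neutral)
  then have "1 \<le> m (f r)" "p (m(f r := m (f r) - 1, g r := m (g r) + 1)) \<noteq> 0"
    using polarize_apply[OF assms(1), of r p m] by (auto split: if_splits)
  then show ?thesis by (rule that)
qed

lemma deg_weight_shift:
  assumes "s \<noteq> t" "1 \<le> m s"
  shows "deg (m(s := m s - 1, t := m t + 1)) = deg m"
    "weight d (m(s := m s - 1, t := m t + 1)) + of_bool (coord d s) = weight d m + of_bool (coord d t)"
  using sum_shift[where m = m, OF _ assms, of UNIV] sum_shift[where m = m, OF _ assms, of "{t. coord d t}"]
  by (simp_all add: deg_def weight_def)

lemma raising_support:
  assumes "raising d p m \<noteq> 0"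
  obtains m' where "p m' \<noteq> 0" "deg m' = deg m" "weight d m' = weight d m + 1"
    "\<forall>d'. d' \<noteq> d \<longrightarrow> weight d' m' = weight d' m"
proof -
  obtain r where r: "1 \<le> m (low d r)"
    "p (m(low d r := m (low d r) - 1, high d r := m (high d r) + 1)) \<noteq> 0"
    using polar_sum_support[OF coord_low_high(4) assms] by blast
  let ?m' = "m(low d r := m (low d r) - 1, high d r := m (high d r) + 1)"
  note shift = deg_weight_shift[where m = m, OF coord_low_high(4) r(1)]
  show ?thesis
  proof (rule that[OF r(2) shift(1)])
    show "weight d ?m' = weight d m + 1"
      using shift(2)[of d] by (simp add: coord_low_high)
    show "\<forall>d'. d' \<noteq> d \<longrightarrow> weight d' ?m' = weight d' m"
    proof (intro allI impI)
      fix d' assume "d' \<noteq> d"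
      then show "weight d' ?m' = weight d' m"
        using shift(2)[of d'] coord_low_high(3)[of d' d r] by simp
    qed
  qed
qed

lemma lowering_support:
  assumes "lowering d p m \<noteq> 0"
  obtains m' where "p m' \<noteq> 0" "deg m' = deg m" "weight d m' + 1 = weight d m"
    "\<forall>d'. d' \<noteq> d \<longrightarrow> weight d' m' = weight d' m"
proof -
  obtain r where r: "1 \<le> m (high d r)"
    "p (m(high d r := m (high d r) - 1, low d r := m (low d r) + 1)) \<noteq> 0"
    using polar_sum_support[OF coord_low_high(4)[symmetric] assms] by blast
  let ?m' = "m(high d r := m (high d r) - 1, low d r := m (low d r) + 1)"
  note shift = deg_weight_shift[where m = m, OF coord_low_high(4)[symmetric] r(1)]
  show ?thesis
  proof (rule that[OF r(2) shift(1)])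
    show "weight d ?m' + 1 = weight d m"
      using shift(2)[of d] by (simp add: coord_low_high)
    show "\<forall>d'. d' \<noteq> d \<longrightarrow> weight d' ?m' = weight d' m"
    proof (intro allI impI)
      fix d' assume "d' \<noteq> d"
      then show "weight d' ?m' = weight d' m"
        using shift(2)[of d'] coord_low_high(3)[of d' d r] by simp
    qed
  qed
qed

definition in_weight_space :: "nat \<Rightarrow> (factor \<Rightarrow> nat) \<Rightarrow> cpoly \<Rightarrow> bool" where
  "in_weight_space n w p \<longleftrightarrow> (\<forall>m. p m \<noteq> 0 \<longrightarrow> deg m = n \<and> (\<forall>d. weight d m = w d))"

definition hwv_wrt :: "nat \<Rightarrow> (factor \<Rightarrow> nat) \<Rightarrow> factor set \<Rightarrow> cpoly set" where
  "hwv_wrt n w D = {p. in_weight_space n w p \<and> (\<forall>d\<in>D. raising d p = 0)}"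

lemma in_weight_space_raising:
  assumes "in_weight_space n w p"
  shows "in_weight_space n (w(d := w d - 1)) (raising d p)"
  unfolding in_weight_space_def
proof (intro allI impI)
  fix m assume "raising d p m \<noteq> 0"
  then obtain m' where "p m' \<noteq> 0" "deg m' = deg m" "weight d m' = weight d m + 1"
    "\<forall>d'. d' \<noteq> d \<longrightarrow> weight d' m' = weight d' m"
    using raising_support by blast
  then show "deg m = n \<and> (\<forall>d'. weight d' m = (w(d := w d - 1)) d')"
    using assms unfolding in_weight_space_def by (metis add_diff_cancel_right' fun_upd_apply)
qed

lemma in_weight_space_lowering:
  assumes "in_weight_space n w p"
  shows "in_weight_space n (w(d := w d + 1)) (lowering d p)"
  unfolding in_weight_space_def
proof (intro allI impI)
  fix m assume "lowering d p m \<noteq> 0"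
  then obtain m' where "p m' \<noteq> 0" "deg m' = deg m" "weight d m' + 1 = weight d m"
    "\<forall>d'. d' \<noteq> d \<longrightarrow> weight d' m' = weight d' m"
    using lowering_support by blast
  then show "deg m = n \<and> (\<forall>d'. weight d' m = (w(d := w d + 1)) d')"
    using assms unfolding in_weight_space_def by (metis fun_upd_apply)
qed

lemma raising_eq_0_if_weight_eq_0:
  assumes "in_weight_space n w p" "w d = 0"
  shows "raising d p = 0"
proof (rule ext, rule ccontr)
  fix m assume "raising d p m \<noteq> 0 m"
  then obtain m' where "p m' \<noteq> 0" "weight d m' = weight d m + 1"
    by (metis raising_support zero_fun_def)
  then show False using assms unfolding in_weight_space_def by force
qed

lemma subspace_hwv_wrt: "cs.subspace (hwv_wrt n w D)"
  unfolding cs.subspace_def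
proof (intro conjI ballI allI)
  show "0 \<in> hwv_wrt n w D"
    by (simp add: hwv_wrt_def in_weight_space_def polar_sum_zero)
next
  fix p q assume "p \<in> hwv_wrt n w D" "q \<in> hwv_wrt n w D"
  then show "p + q \<in> hwv_wrt n w D"
    unfolding hwv_wrt_def in_weight_space_def
    by (simp add: polar_sum_add) (metis add.right_neutral plus_fun_apply)
next
  fix c p assume p: "p \<in> hwv_wrt n w D"
  have "p m \<noteq> 0" if "cscale c p m \<noteq> 0" for m using that by (simp add: cscale_def)
  then show "cscale c p \<in> hwv_wrt n w D"
    using p by (auto simp: hwv_wrt_def in_weight_space_def polar_sum_cscale)
qed

definition monomials :: "nat \<Rightarrow> (factor \<Rightarrow> nat) \<Rightarrow> monomial set" where
  "monomials n w = {m. deg m = n \<and> (\<forall>d. weight d m = w d)}"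

lemma finite_deg_eq: "finite {m. deg m = n}"
proof -
  have "m t \<le> deg m" for m t
    unfolding deg_def by (rule member_le_sum) auto
  then have "{m. deg m = n} \<subseteq> {m. \<forall>t. (t \<in> UNIV \<longrightarrow> m t \<in> {..n}) \<and> (t \<notin> UNIV \<longrightarrow> m t = 0)}"
    by auto
  then show ?thesis
    by (rule finite_subset) (rule finite_set_of_finite_funs; simp)
qed

lemma finite_monomials: "finite (monomials n w)"
  by (rule finite_subset[OF _ finite_deg_eq[of n]]) (auto simp: monomials_def)

definition basis_poly :: "monomial \<Rightarrow> cpoly" where
  "basis_poly m0 = (\<lambda>m. if m = m0 then 1 else 0)"

lemma basis_poly_eq_iff: "basis_poly m1 = basis_poly m0 \<longleftrightarrow> m1 = m0"
  unfolding basis_poly_def by (metis zero_neq_one)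

lemma sum_apply: "(\<Sum>i\<in>I. f i) x = (\<Sum>i\<in>I. f i x)"
  by (induct I rule: infinite_finite_induct) auto

lemma in_weight_space_eq_sum:
  assumes "in_weight_space n w p"
  shows "p = (\<Sum>m0\<in>monomials n w. cscale (p m0) (basis_poly m0))"
proof (rule ext)
  fix m
  have "(\<Sum>m0\<in>monomials n w. cscale (p m0) (basis_poly m0)) m
      = (\<Sum>m0\<in>monomials n w. if m = m0 then p m0 else 0)"
    unfolding sum_apply by (rule sum.cong) (auto simp: cscale_def basis_poly_def)
  also have "\<dots> = (if m \<in> monomials n w then p m else 0)"
    by (simp add: finite_monomials)
  also have "\<dots> = p m"
    using assms by (auto simp: in_weight_space_def monomials_def)
  finally show "p m = (\<Sum>m0\<in>monomials n w. cscale (p m0) (basis_poly m0)) m" by simp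
qed

lemma hwv_wrt_subset_span: "hwv_wrt n w D \<subseteq> cs.span (basis_poly ` monomials n w)"
proof
  fix p assume "p \<in> hwv_wrt n w D"
  then have "p = (\<Sum>m0\<in>monomials n w. cscale (p m0) (basis_poly m0))"
    by (simp add: hwv_wrt_def in_weight_space_eq_sum)
  also have "\<dots> \<in> cs.span (basis_poly ` monomials n w)"
    by (intro cs.span_sum cs.span_scale cs.span_base) auto
  finally show "p \<in> cs.span (basis_poly ` monomials n w)" .
qed

lemma independent_basis_poly: "cs.independent (basis_poly ` M)"
  unfolding cs.independent_explicit_module
proof (intro allI impI)
  fix T u v assume T: "finite T" "T \<subseteq> basis_poly ` M" "(\<Sum>v\<in>T. cscale (u v) v) = 0" "v \<in> T"
  then obtain m0 where m0: "v = basis_poly m0" by auto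
  have "0 = (\<Sum>v\<in>T. cscale (u v) v) m0" using T(3) by simp
  also have "\<dots> = (\<Sum>v'\<in>T. if v' = v then u v else 0)"
    unfolding sum_apply
  proof (rule sum.cong[OF refl])
    fix v' assume "v' \<in> T"
    then obtain m1 where v': "v' = basis_poly m1" using T(2) by auto
    show "cscale (u v') v' m0 = (if v' = v then u v else 0)"
      unfolding v' m0 basis_poly_eq_iff by (simp add: cscale_def basis_poly_def)
  qed
  also have "\<dots> = u v" using T(1,4) by simp
  finally show "u v = 0" by simp
qed

lemma dim_hwv_wrt_empty: "cs.dim (hwv_wrt n w {}) = card (monomials n w)"
proof -
  have inj: "inj_on basis_poly (monomials n w)"
    unfolding inj_on_def basis_poly_eq_iff by simp
  have "basis_poly ` monomials n w \<subseteq> hwv_wrt n w {}"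
    by (auto simp: hwv_wrt_def in_weight_space_def basis_poly_def monomials_def split: if_splits)
  then have "card (basis_poly ` monomials n w) = cs.dim (hwv_wrt n w {})"
    by (rule cs.basis_card_eq_dim[OF _ hwv_wrt_subset_span independent_basis_poly])
  then show ?thesis using card_image[OF inj] by simp
qed

section \<open>The Fischer inner product\<close>

lemma prod_fun_upd_mult:
  fixes f :: "'v \<Rightarrow> 'a::comm_monoid_mult"
  assumes "finite S" "x \<in> S"
  shows "prod (f(x := y)) S * f x = prod f S * y"
proof -
  have "prod (f(x := y)) (S - {x}) = prod f (S - {x})"
    by (rule prod.cong) auto
  then have "prod (f(x := y)) S = y * prod f (S - {x})"
    using prod.remove[OF assms, of "f(x := y)"] by simp
  moreover have "prod f S = f x * prod f (S - {x})"
    using prod.remove[OF assms] .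
  ultimately show ?thesis by (simp add: ac_simps)
qed

definition exp_fact :: "monomial \<Rightarrow> nat" where
  "exp_fact m = (\<Prod>t\<in>UNIV. fact (m t))"

lemma exp_fact_pos: "0 < exp_fact m"
  unfolding exp_fact_def by (intro prod_pos) auto

lemma exp_fact_shift:
  assumes "s \<noteq> t" "1 \<le> m s"
  shows "exp_fact (m(s := m s - 1, t := m t + 1)) * m s = exp_fact m * (m t + 1)"
proof -
  let ?g = "\<lambda>x. fact (m x) :: nat" and ?E' = "exp_fact (m(s := m s - 1, t := m t + 1))"
  have "?E' = prod ((?g(s := fact (m s - 1)))(t := fact (m t + 1))) UNIV"
    unfolding exp_fact_def by (intro prod.cong) auto
  then have "?E' * fact (m t) * fact (m s) = exp_fact m * fact (m t + 1) * fact (m s - 1)"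
    using prod_fun_upd_mult[of UNIV t "?g(s := fact (m s - 1))" "fact (m t + 1)"]
      prod_fun_upd_mult[of UNIV s ?g "fact (m s - 1)"] assms(1)
    by (simp add: exp_fact_def ac_simps)
  moreover have "fact (m s) = m s * fact (m s - 1)" "fact (m t + 1) = (m t + 1) * fact (m t)"
    using assms(2) by (simp_all add: fact_reduce)
  ultimately have "(?E' * m s) * (fact (m t) * fact (m s - 1))
      = (exp_fact m * (m t + 1)) * (fact (m t) * fact (m s - 1))"
    by (simp only: mult_ac)
  moreover have "fact (m t) * fact (m s - 1) \<noteq> (0 :: nat)" by simp
  ultimately show ?thesis by simp
qed

text \<open>\<open>\<langle>x\<^sup>\<alpha>, x\<^sup>\<beta>\<rangle> = \<alpha>! \<delta>\<^sub>\<alpha>\<^sub>\<beta>\<close>: the factorial weights are what make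
  \<open>x\<^sub>s \<partial>\<^sub>t\<close> and \<open>x\<^sub>t \<partial>\<^sub>s\<close> adjoint.\<close>

definition fischer :: "nat \<Rightarrow> cpoly \<Rightarrow> cpoly \<Rightarrow> complex" where
  "fischer n p q = (\<Sum>m | deg m = n. of_nat (exp_fact m) * p m * cnj (q m))"

lemma polarize_adjoint:
  assumes st: "s \<noteq> t"
  shows "fischer n (polarize s t p) q = fischer n p (polarize t s q)"
proof -
  define \<sigma> where "\<sigma> m = m(s := m s - 1, t := m t + 1)" for m :: monomial
  define \<tau> where "\<tau> m = m(t := m t - 1, s := m s + 1)" for m :: monomial
  let ?S = "{m. deg m = n \<and> 1 \<le> m s}" and ?T = "{m. deg m = n \<and> 1 \<le> m t}"
  have deg_\<sigma>: "deg (\<sigma> m) = deg m" if "1 \<le> m s" for m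
    using deg_weight_shift(1)[where m = m, OF st that] by (simp add: \<sigma>_def)
  have deg_\<tau>: "deg (\<tau> m) = deg m" if "1 \<le> m t" for m
    using deg_weight_shift(1)[where m = m, OF st[symmetric] that] by (simp add: \<tau>_def)
  have "fischer n (polarize s t p) q
      = (\<Sum>m\<in>?S. of_nat (exp_fact m) * (of_nat (m t + 1) * p (\<sigma> m)) * cnj (q m))"
    unfolding fischer_def polarize_apply[OF st] \<sigma>_def
    by (rule sum.mono_neutral_cong_right) (auto simp: finite_deg_eq)
  also have "\<dots> = (\<Sum>m\<in>?T. of_nat (exp_fact m) * p m * cnj (of_nat (m s + 1) * q (\<tau> m)))"
  proof (rule sum.reindex_bij_witness[of _ \<tau> \<sigma>])
    fix m assume m: "m \<in> ?S"
    show "\<tau> (\<sigma> m) = m" "\<sigma> m \<in> ?T" using m st deg_\<sigma> by (auto simp: \<sigma>_def \<tau>_def fun_eq_iff)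
    have "exp_fact (\<sigma> m) * m s = exp_fact m * (m t + 1)"
      using exp_fact_shift[OF st, of m] m by (simp add: \<sigma>_def)
    then have "of_nat (exp_fact (\<sigma> m)) * of_nat (m s) = (of_nat (exp_fact m * (m t + 1)) :: complex)"
      by (metis of_nat_mult)
    moreover have "\<sigma> m s + 1 = m s" using m st by (simp add: \<sigma>_def)
    ultimately show "of_nat (exp_fact (\<sigma> m)) * p (\<sigma> m) * cnj (of_nat (\<sigma> m s + 1) * q (\<tau> (\<sigma> m)))
        = of_nat (exp_fact m) * (of_nat (m t + 1) * p (\<sigma> m)) * cnj (q m)"
      using \<open>\<tau> (\<sigma> m) = m\<close> by (simp add: algebra_simps)
  next
    fix m assume m: "m \<in> ?T"
    show "\<sigma> (\<tau> m) = m" "\<tau> m \<in> ?S" using m st deg_\<tau> by (auto simp: \<sigma>_def \<tau>_def fun_eq_iff)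
  qed
  also have "\<dots> = fischer n p (polarize t s q)"
    unfolding fischer_def polarize_apply[OF st[symmetric]] \<tau>_def
    by (rule sum.mono_neutral_cong_left) (auto simp: finite_deg_eq)
  finally show ?thesis .
qed

lemma fischer_sum_left: "fischer n (\<lambda>m. \<Sum>r\<in>I. g r m) q = (\<Sum>r\<in>I. fischer n (g r) q)"
  unfolding fischer_def by (simp add: sum_distrib_left sum_distrib_right sum.swap[of _ I])

lemma fischer_sum_right: "fischer n p (\<lambda>m. \<Sum>r\<in>I. g r m) = (\<Sum>r\<in>I. fischer n p (g r))"
  unfolding fischer_def by (simp add: sum_distrib_left sum.swap[of _ I])

lemma polar_sum_adjoint:
  assumes "\<And>r. f r \<noteq> g r"
  shows "fischer n (polar_sum f g p) q = fischer n p (polar_sum g f q)"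
  unfolding polar_sum_def fischer_sum_left fischer_sum_right polarize_adjoint[OF assms] ..

lemma fischer_add_left: "fischer n (p + q) r = fischer n p r + fischer n q r"
  unfolding fischer_def by (simp add: algebra_simps sum.distrib)

lemma fischer_cscale_left: "fischer n (cscale c p) r = c * fischer n p r"
  unfolding fischer_def cscale_def by (simp add: algebra_simps sum_distrib_left)

lemma Re_fischer_self: "Re (fischer n p p) = (\<Sum>m | deg m = n. real (exp_fact m) * (cmod (p m))\<^sup>2)"
proof -
  have "Re (of_nat (exp_fact m) * p m * cnj (p m)) = real (exp_fact m) * (cmod (p m))\<^sup>2" for m
    using cmod_power2[of "p m"] by (simp add: power2_eq_square algebra_simps)
  then show ?thesis unfolding fischer_def by (simp add: Re_sum)
qed

lemma Re_fischer_self_nonneg: "0 \<le> Re (fischer n p p)"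
  unfolding Re_fischer_self by (intro sum_nonneg) auto

lemma Re_fischer_self_pos:
  assumes "in_weight_space n w p" "p \<noteq> 0"
  shows "0 < Re (fischer n p p)"
proof -
  obtain m where m: "p m \<noteq> 0" using assms(2) by (force simp: fun_eq_iff)
  then have "deg m = n" using assms(1) by (auto simp: in_weight_space_def)
  moreover have "0 < real (exp_fact m) * (cmod (p m))\<^sup>2" using m exp_fact_pos[of m] by simp
  ultimately show ?thesis unfolding Re_fischer_self
    by (intro sum_pos2[OF finite_deg_eq, of m]) auto
qed

lemma raising_lowering_eq:
  assumes "in_weight_space n w p"
  shows "raising d (lowering d p) = lowering d (raising d p) + cscale (of_int (int n - 2 * int (w d))) p"
proof (rule ext)
  fix m
  show "raising d (lowering d p) m
      = (lowering d (raising d p) + cscale (of_int (int n - 2 * int (w d))) p) m"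
    using raising_lowering_apply[of d p m] assms
    by (cases "p m = 0") (auto simp: cscale_def in_weight_space_def)
qed

lemma raising_lowering_eq_0_imp_eq_0:
  assumes p: "in_weight_space n w p" and "2 * w d < n" and "raising d (lowering d p) = 0"
  shows "p = 0"
proof (rule ccontr)
  assume "p \<noteq> 0"
  define h :: int where "h = int n - 2 * int (w d)"
  have "0 = fischer n (raising d (lowering d p)) p"
    unfolding \<open>raising d (lowering d p) = 0\<close> fischer_def by simp
  also have "\<dots> = fischer n (lowering d (raising d p)) p + of_int h * fischer n p p"
    unfolding raising_lowering_eq[OF p] h_def by (simp add: fischer_add_left fischer_cscale_left)
  also have "fischer n (lowering d (raising d p)) p = fischer n (raising d p) (raising d p)"
    by (rule polar_sum_adjoint) (simp add: coord_low_high(4)[symmetric])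
  finally have "Re 0 = Re (fischer n (raising d p) (raising d p) + of_int h * fischer n p p)"
    by (rule arg_cong)
  then have "0 = Re (fischer n (raising d p) (raising d p)) + real_of_int h * Re (fischer n p p)"
    by simp
  moreover have "0 < real_of_int h * Re (fischer n p p)"
    using \<open>2 * w d < n\<close> Re_fischer_self_pos[OF p \<open>p \<noteq> 0\<close>] by (simp add: h_def)
  ultimately show False using Re_fischer_self_nonneg[of n "raising d p"] by linarith
qed

section \<open>Removing one raising operator\<close>

lemma raising_mem_hwv_wrt:
  assumes "d \<notin> D" "p \<in> hwv_wrt n w D"
  shows "raising d p \<in> hwv_wrt n (w(d := w d - 1)) D"
proof -
  have "raising d' (raising d p) = 0" if "d' \<in> D" for d'
    using assms that raising_commute[of d d' p] by (auto simp: hwv_wrt_def polar_sum_zero)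
  then show ?thesis
    using assms(2) in_weight_space_raising by (simp add: hwv_wrt_def)
qed

lemma lowering_mem_hwv_wrt:
  assumes "d \<notin> D" "1 \<le> w d" "p \<in> hwv_wrt n (w(d := w d - 1)) D"
  shows "lowering d p \<in> hwv_wrt n w D"
proof -
  have "raising d' (lowering d p) = 0" if "d' \<in> D" for d'
    using assms that raising_lowering_commute[of d d' p] by (auto simp: hwv_wrt_def polar_sum_zero)
  moreover have "(w(d := w d - 1))(d := (w(d := w d - 1)) d + 1) = w"
    using assms(2) by (auto simp: fun_eq_iff)
  ultimately show ?thesis
    using assms(3) in_weight_space_lowering[of n "w(d := w d - 1)" p d] by (simp add: hwv_wrt_def)
qed

text \<open>Since \<open>E F\<close> is injective on the target, \<open>E\<close> maps onto it.\<close>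

lemma dim_raising_image:
  assumes "d \<notin> D" "1 \<le> w d" "2 * w d \<le> n"
  shows "cs.dim (raising d ` hwv_wrt n w D) = cs.dim (hwv_wrt n (w(d := w d - 1)) D)"
proof -
  let ?Z = "hwv_wrt n w D" and ?Z' = "hwv_wrt n (w(d := w d - 1)) D"
  let ?EF = "\<lambda>p. raising d (lowering d p)"
  have fin: "finite (basis_poly ` monomials n (w(d := w d - 1)))"
    by (simp add: finite_monomials)
  have "Vector_Spaces.linear cscale cscale ?EF"
    using Vector_Spaces.linear_compose[OF linear_polar_sum linear_polar_sum] by (simp add: o_def)
  then have "cs.dim {p \<in> ?Z'. ?EF p = 0} + cs.dim (?EF ` ?Z') = cs.dim ?Z'"
    by (rule cs.dim_kernel_add_dim_image[OF _ subspace_hwv_wrt hwv_wrt_subset_span fin])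
  moreover have "{p \<in> ?Z'. ?EF p = 0} = {0}"
    using raising_lowering_eq_0_imp_eq_0[of n "w(d := w d - 1)" _ d] assms(2,3)
      cs.subspace_0[OF subspace_hwv_wrt] by (auto simp: hwv_wrt_def polar_sum_zero)
  ultimately have eq: "cs.dim (?EF ` ?Z') = cs.dim ?Z'"
    using cs.dim_span[of "{}"] cs.dim_eq_card_independent[OF cs.independent_empty] by simp
  have sub1: "?EF ` ?Z' \<subseteq> raising d ` ?Z"
    using lowering_mem_hwv_wrt[of d D w, OF assms(1,2)] by auto
  have sub2: "raising d ` ?Z \<subseteq> ?Z'"
    using raising_mem_hwv_wrt[OF assms(1)] by auto
  note span = hwv_wrt_subset_span[of n "w(d := w d - 1)" D]
  have "cs.dim (?EF ` ?Z') \<le> cs.dim (raising d ` ?Z)"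
    using cs.dim_le_dim_of_subset_finite_span[OF sub1 _ fin] sub2 span by blast
  moreover have "cs.dim (raising d ` ?Z) \<le> cs.dim ?Z'"
    by (rule cs.dim_le_dim_of_subset_finite_span[OF sub2 span fin])
  ultimately show ?thesis using eq by linarith
qed

lemma dim_hwv_wrt_insert:
  assumes "d \<notin> D" "2 * w d \<le> n"
  shows "int (cs.dim (hwv_wrt n w (insert d D))) = int (cs.dim (hwv_wrt n w D))
           - (if w d = 0 then 0 else int (cs.dim (hwv_wrt n (w(d := w d - 1)) D)))"
proof (cases "w d = 0")
  case True
  then have "hwv_wrt n w (insert d D) = hwv_wrt n w D"
    using raising_eq_0_if_weight_eq_0[of n w _ d] by (auto simp: hwv_wrt_def)
  then show ?thesis using True by simp
next
  case False
  have "cs.dim {p \<in> hwv_wrt n w D. raising d p = 0} + cs.dim (raising d ` hwv_wrt n w D)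
      = cs.dim (hwv_wrt n w D)"
    by (rule cs.dim_kernel_add_dim_image[OF linear_polar_sum subspace_hwv_wrt hwv_wrt_subset_span])
      (simp add: finite_monomials)
  moreover have "{p \<in> hwv_wrt n w D. raising d p = 0} = hwv_wrt n w (insert d D)"
    by (auto simp: hwv_wrt_def)
  ultimately have "cs.dim (hwv_wrt n w (insert d D)) + cs.dim (raising d ` hwv_wrt n w D)
      = cs.dim (hwv_wrt n w D)"
    by simp
  then show ?thesis
    using dim_raising_image[of d D w n] assms False by simp
qed

definition wvec :: "nat \<Rightarrow> nat \<Rightarrow> nat \<Rightarrow> factor \<Rightarrow> nat" where
  "wvec a b c = (\<lambda>d. case d of FA \<Rightarrow> a | FB \<Rightarrow> b | FC \<Rightarrow> c)"

lemma wvec_apply [simp]: "wvec a b c FA = a" "wvec a b c FB = b" "wvec a b c FC = c"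
  by (simp_all add: wvec_def)

lemma wvec_upd [simp]:
  "(wvec a b c)(FA := x) = wvec x b c" "(wvec a b c)(FB := x) = wvec a x c"
  "(wvec a b c)(FC := x) = wvec a b x"
  by (auto simp: wvec_def fun_eq_iff split: factor.splits)

lemma mu_eq_dim_hwv_wrt: "mu n a b c = cs.dim (hwv_wrt n (wvec a b c) UNIV)"
proof -
  have "raiseA = raising FA" "raiseB = raising FB" "raiseC = raising FC"
    by (auto simp: raiseA_def raiseB_def raiseC_def polar_sum_def polar_eq_polarize fun_eq_iff)
  moreover have "wtA = weight FA" "wtB = weight FB" "wtC = weight FC"
    by (auto simp: wtA_def wtB_def wtC_def weight_def fun_eq_iff)
  ultimately have "hwv n a b c = hwv_wrt n (wvec a b c) UNIV"
    unfolding hwv_def hwv_wrt_def in_weight_space_def all_factor factor_UNIV by auto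
  then show ?thesis by (simp add: mu_def)
qed

section \<open>Counting monomials\<close>

lemma monomials_wvec_iff:
  "m \<in> monomials n (wvec a b c) \<longleftrightarrow>
     deg m = n \<and> weight FA m = a \<and> weight FB m = b \<and> weight FC m = c"
  unfolding monomials_def all_factor by simp

text \<open>A monomial of degree N and weights (a, b, c) splits into its part of C-weight 1
  (a 2\<times>2 table of total c) and its part of C-weight 0 (a table of total N - c).
  It is parametrised by the A- and B-weights a1, b1 of the first table and by
  the offsets l, k of the exponents of x_111 and x_110 above their least
  admissible values; the other six exponents are then determined. For fixed k and l
  the constraints on a1 and on b1 are independent, so the count is a sum of products.\<close>

definition admissible :: "int \<Rightarrow> int \<Rightarrow> int \<Rightarrow> int \<Rightarrow> int \<Rightarrow> int \<Rightarrow> bool" where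
  "admissible N c k l a a1 \<longleftrightarrow> l \<le> a1 \<and> a1 \<le> c - l \<and> k \<le> a - a1 \<and> a - a1 \<le> N - c - k"

definition slice_count :: "int \<Rightarrow> int \<Rightarrow> int \<Rightarrow> int \<Rightarrow> int \<Rightarrow> int" where
  "slice_count N k l a c = (\<Sum>a1\<in>{0..N}. if admissible N c k l a a1 then 1 else 0)"

definition monomial_count :: "int \<Rightarrow> int \<Rightarrow> int \<Rightarrow> int \<Rightarrow> int" where
  "monomial_count N a b c = (\<Sum>k\<in>{0..N}. \<Sum>l\<in>{0..N}. slice_count N k l a c * slice_count N k l b c)"

definition param_set :: "int \<Rightarrow> int \<Rightarrow> int \<Rightarrow> int \<Rightarrow> (int \<times> int \<times> int \<times> int) set" where
  "param_set N a b c = {q \<in> {0..N} \<times> {0..N} \<times> {0..N} \<times> {0..N}.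
      case q of (k, l, a1, b1) \<Rightarrow> admissible N c k l a a1 \<and> admissible N c k l b b1}"

definition params :: "int \<Rightarrow> int \<Rightarrow> int \<Rightarrow> int \<Rightarrow> monomial \<Rightarrow> int \<times> int \<times> int \<times> int" where
  "params N a b c m =
     (let a1 = int (m (True,False,True)) + int (m (True,True,True));
          b1 = int (m (False,True,True)) + int (m (True,True,True))
      in (int (m (True,True,False)) - max 0 (a - a1 + b - b1 - (N - c)),
          int (m (True,True,True)) - max 0 (a1 + b1 - c), a1, b1))"

definition param_entry :: "int \<Rightarrow> int \<Rightarrow> int \<Rightarrow> int \<Rightarrow> int \<times> int \<times> int \<times> int \<Rightarrow> idx \<Rightarrow> int" where
  "param_entry N a b c q x = (case q of (k, l, a1, b1) \<Rightarrow> case x of (i, j, h) \<Rightarrow>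
     (let x111 = l + max 0 (a1 + b1 - c); x110 = k + max 0 (a - a1 + b - b1 - (N - c)) in
      if h then (if i then (if j then x111 else a1 - x111)
                 else (if j then b1 - x111 else c - a1 - b1 + x111))
      else (if i then (if j then x110 else a - a1 - x110)
            else (if j then b - b1 - x110 else N - c - (a - a1) - (b - b1) + x110))))"

definition monomial_of_params :: "int \<Rightarrow> int \<Rightarrow> int \<Rightarrow> int \<Rightarrow> int \<times> int \<times> int \<times> int \<Rightarrow> monomial" where
  "monomial_of_params N a b c q = (\<lambda>x. nat (param_entry N a b c q x))"

lemma param_entry_nonneg:
  assumes "q \<in> param_set N a b c"
  shows "0 \<le> param_entry N a b c q x"
proof -
  obtain k l a1 b1 where q: "q = (k, l, a1, b1)" by (cases q) auto
  obtain i j h where x: "x = (i, j, h)" by (cases x) auto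
  have "0 \<le> k" "0 \<le> l" "admissible N c k l a a1" "admissible N c k l b b1"
    using assms by (auto simp: param_set_def q)
  then show ?thesis unfolding q x param_entry_def admissible_def Let_def
    by (cases i; cases j; cases h) (auto simp: max_def)
qed

lemma monomials_wvec_int_eqs:
  assumes "m \<in> monomials n (wvec a b c)"
  shows "int n = int (m (False,False,False)) + int (m (False,False,True)) + int (m (False,True,False))
      + int (m (False,True,True)) + int (m (True,False,False)) + int (m (True,False,True))
      + int (m (True,True,False)) + int (m (True,True,True))"
    "int a = int (m (True,False,False)) + int (m (True,False,True)) + int (m (True,True,False))
      + int (m (True,True,True))"
    "int b = int (m (False,True,False)) + int (m (False,True,True)) + int (m (True,True,False))
      + int (m (True,True,True))"
    "int c = int (m (False,False,True)) + int (m (False,True,True)) + int (m (True,False,True))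
      + int (m (True,True,True))"
  using assms unfolding monomials_wvec_iff by (auto simp: deg_expand weight_expand)

lemma params_mem_param_set:
  assumes "m \<in> monomials n (wvec a b c)" "c \<le> n"
  shows "params (int n) (int a) (int b) (int c) m \<in> param_set (int n) (int a) (int b) (int c)"
  unfolding param_set_def params_def admissible_def Let_def
  using monomials_wvec_int_eqs[OF assms(1)] assms(2) by (auto simp: max_def)

lemma monomial_of_params_mem_monomials:
  assumes "q \<in> param_set (int n) (int a) (int b) (int c)"
  shows "monomial_of_params (int n) (int a) (int b) (int c) q \<in> monomials n (wvec a b c)"
proof -
  let ?m = "monomial_of_params (int n) (int a) (int b) (int c) q"
  obtain k l a1 b1 where q: "q = (k, l, a1, b1)" by (cases q) auto
  have entry: "int (?m x) = param_entry (int n) (int a) (int b) (int c) q x" for x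
    using param_entry_nonneg[OF assms] by (simp add: monomial_of_params_def)
  have "0 \<le> k" "0 \<le> l" "admissible (int n) (int c) k l (int a) a1" "admissible (int n) (int c) k l (int b) b1"
    using assms by (auto simp: param_set_def q)
  then have "int (deg ?m) = int n \<and> int (weight FA ?m) = int a \<and> int (weight FB ?m) = int b
      \<and> int (weight FC ?m) = int c"
    unfolding deg_expand weight_expand of_nat_add entry
    unfolding q param_entry_def admissible_def Let_def by simp
  then show ?thesis unfolding monomials_wvec_iff by simp
qed

lemma monomial_of_params_params:
  assumes "m \<in> monomials n (wvec a b c)"
  shows "monomial_of_params (int n) (int a) (int b) (int c) (params (int n) (int a) (int b) (int c) m) = m"
proof (rule ext)
  fix x :: idx
  obtain i j h where x: "x = (i, j, h)" by (cases x) auto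
  have "param_entry (int n) (int a) (int b) (int c) (params (int n) (int a) (int b) (int c) m) x = int (m x)"
    unfolding x param_entry_def params_def Let_def
    by (cases i; cases j; cases h) (simp_all add: monomials_wvec_int_eqs[OF assms])
  then show "monomial_of_params (int n) (int a) (int b) (int c) (params (int n) (int a) (int b) (int c) m) x = m x"
    by (simp add: monomial_of_params_def)
qed

lemma params_monomial_of_params:
  assumes "q \<in> param_set N a b c"
  shows "params N a b c (monomial_of_params N a b c q) = q"
proof -
  obtain k l a1 b1 where q: "q = (k, l, a1, b1)" by (cases q) auto
  have entry: "int (monomial_of_params N a b c q x) = param_entry N a b c q x" for x
    using param_entry_nonneg[OF assms] by (simp add: monomial_of_params_def)
  have "0 \<le> k" "0 \<le> l" "admissible N c k l a a1" "admissible N c k l b b1"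
    using assms by (auto simp: param_set_def q)
  then show ?thesis
    unfolding params_def Let_def entry unfolding q param_entry_def admissible_def Let_def by simp
qed

lemma card_param_set:
  "int (card (param_set N a b c)) = monomial_count N a b c"
proof -
  let ?B = "{0..N} \<times> {0..N} \<times> {0..N} \<times> {0..N}"
  let ?P = "\<lambda>q. case q of (k, l, a1, b1) \<Rightarrow> admissible N c k l a a1 \<and> admissible N c k l b b1"
  have "int (card (param_set N a b c)) = (\<Sum>q\<in>{q\<in>?B. ?P q}. 1)"
    unfolding param_set_def by simp
  also have "\<dots> = (\<Sum>q\<in>?B. if ?P q then 1 else 0)"
    by (rule sum.inter_filter) simp
  also have "\<dots> = (\<Sum>k\<in>{0..N}. \<Sum>l\<in>{0..N}. \<Sum>a1\<in>{0..N}. \<Sum>b1\<in>{0..N}.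
        (if admissible N c k l a a1 then 1 else 0) * (if admissible N c k l b b1 then 1 else 0))"
    by (simp only: sum.cartesian_product) (intro sum.cong refl, auto split: if_splits)
  also have "\<dots> = monomial_count N a b c"
    unfolding monomial_count_def slice_count_def sum_product by simp
  finally show ?thesis .
qed

lemma card_monomials:
  assumes "c \<le> n"
  shows "int (card (monomials n (wvec a b c))) = monomial_count (int n) (int a) (int b) (int c)"
proof -
  have "bij_betw (params (int n) (int a) (int b) (int c)) (monomials n (wvec a b c))
      (param_set (int n) (int a) (int b) (int c))"
    by (rule bij_betw_byWitness[where f' = "monomial_of_params (int n) (int a) (int b) (int c)"])
      (auto simp: monomial_of_params_params params_monomial_of_params
        intro: params_mem_param_set[OF _ assms] monomial_of_params_mem_monomials)
  then show ?thesis
    by (simp add: bij_betw_same_card card_param_set[symmetric])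
qed

section \<open>The closed form\<close>

lemma sum_indicator_interval:
  fixes lo hi N :: int
  shows "(\<Sum>x\<in>{0..N}. if lo \<le> x \<and> x \<le> hi then 1 else 0 :: int) = max 0 (min N hi - max 0 lo + 1)"
proof -
  have "(\<Sum>x\<in>{0..N}. if lo \<le> x \<and> x \<le> hi then 1 else 0 :: int)
      = int (card {x\<in>{0..N}. lo \<le> x \<and> x \<le> hi})"
    by (simp add: sum.inter_filter[symmetric])
  also have "{x\<in>{0..N}. lo \<le> x \<and> x \<le> hi} = {max 0 lo..min N hi}" by auto
  finally show ?thesis by simp
qed

lemma slice_count_eq:
  assumes "0 \<le> l" "c \<le> N"
  shows "slice_count N k l a c = max 0 (min (c - l) (a - k) - max l (a - N + c + k) + 1)"
proof -
  have "slice_count N k l a c = (\<Sum>a1\<in>{0..N}.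
      if max l (a - N + c + k) \<le> a1 \<and> a1 \<le> min (c - l) (a - k) then 1 else 0)"
    unfolding slice_count_def admissible_def by (rule sum.cong) auto
  also have "\<dots> = max 0 (min N (min (c - l) (a - k)) - max 0 (max l (a - N + c + k)) + 1)"
    by (rule sum_indicator_interval)
  finally show ?thesis
    using assms by (simp add: min_def max_def)
qed

lemma slice_count_diff:
  assumes "0 \<le> k" "0 \<le> l" "0 \<le> a" "2 * a \<le> N" "-1 \<le> c" "c \<le> N"
  shows "slice_count N k l a c - slice_count N k l (a - 1) c
       = (if k + l \<le> a \<and> a \<le> N - c - k + l \<and> a \<le> c + k - l then 1 else 0)"
  unfolding slice_count_eq[OF assms(2,6)] using assms by (smt (z3))

lemma slice_count_neg: "0 \<le> k \<Longrightarrow> slice_count N k l (-1) c = 0"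
  unfolding slice_count_def admissible_def by (intro sum.neutral) auto

lemma monomial_count_neg: "monomial_count N (-1) y z = 0" "monomial_count N x (-1) z = 0"
  unfolding monomial_count_def by (auto intro!: sum.neutral simp: slice_count_neg)

definition hwv_AB_count :: "int \<Rightarrow> int \<Rightarrow> int \<Rightarrow> int \<Rightarrow> int" where
  "hwv_AB_count N x y z = (\<Sum>k\<in>{0..N}. \<Sum>l\<in>{0..N}.
     (if k + l \<le> x \<and> x \<le> N - z - k + l \<and> x \<le> z + k - l then 1 else 0) *
     (if k + l \<le> y \<and> y \<le> N - z - k + l \<and> y \<le> z + k - l then 1 else 0))"

lemma hwv_AB_count_neg: "hwv_AB_count N x y (-1) = 0"
  unfolding hwv_AB_count_def by (intro sum.neutral ballI) auto

lemma monomial_count_mixed_diff: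
  assumes "0 \<le> x" "0 \<le> y" "2 * x \<le> N" "2 * y \<le> N" "-1 \<le> z" "z \<le> N"
  shows "monomial_count N x y z - monomial_count N (x - 1) y z
       - monomial_count N x (y - 1) z + monomial_count N (x - 1) (y - 1) z = hwv_AB_count N x y z"
proof -
  have "monomial_count N x y z - monomial_count N (x - 1) y z
       - monomial_count N x (y - 1) z + monomial_count N (x - 1) (y - 1) z
     = (\<Sum>k\<in>{0..N}. \<Sum>l\<in>{0..N}. (slice_count N k l x z - slice_count N k l (x - 1) z)
          * (slice_count N k l y z - slice_count N k l (y - 1) z))"
    unfolding monomial_count_def
    by (simp add: sum_subtractf[symmetric] sum.distrib[symmetric] algebra_simps)
  also have "\<dots> = hwv_AB_count N x y z"
    unfolding hwv_AB_count_def using assms by (intro sum.cong refl) (simp add: slice_count_diff)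
  finally show ?thesis .
qed

lemma dim_hwv_wrt_FA:
  assumes "2 * a \<le> n" "c \<le> n"
  shows "int (cs.dim (hwv_wrt n (wvec a b c) {FA}))
       = monomial_count (int n) (int a) (int b) (int c) - monomial_count (int n) (int a - 1) (int b) (int c)"
  using dim_hwv_wrt_insert[of FA "{}" "wvec a b c" n] assms
  by (cases "a = 0") (simp_all add: dim_hwv_wrt_empty card_monomials monomial_count_neg of_nat_diff)

lemma dim_hwv_wrt_FA_FB:
  assumes "2 * a \<le> n" "2 * b \<le> n" "c \<le> n"
  shows "int (cs.dim (hwv_wrt n (wvec a b c) {FA, FB})) = hwv_AB_count (int n) (int a) (int b) (int c)"
proof -
  have "{FA, FB} = insert FB {FA}" by auto
  then have "int (cs.dim (hwv_wrt n (wvec a b c) {FA, FB}))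
      = int (cs.dim (hwv_wrt n (wvec a b c) {FA}))
        - (if b = 0 then 0 else int (cs.dim (hwv_wrt n (wvec a (b - 1) c) {FA})))"
    using dim_hwv_wrt_insert[of FB "{FA}" "wvec a b c" n] assms(2) by simp
  also have "\<dots> = monomial_count (int n) (int a) (int b) (int c) - monomial_count (int n) (int a - 1) (int b) (int c)
      - monomial_count (int n) (int a) (int b - 1) (int c) + monomial_count (int n) (int a - 1) (int b - 1) (int c)"
    using dim_hwv_wrt_FA[OF assms(1,3), of b] dim_hwv_wrt_FA[OF assms(1,3), of "b - 1"]
    by (cases "b = 0") (simp_all add: monomial_count_neg of_nat_diff)
  also have "\<dots> = hwv_AB_count (int n) (int a) (int b) (int c)"
    by (rule monomial_count_mixed_diff) (use assms in auto)
  finally show ?thesis .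
qed

lemma mu_eq_hwv_AB_count_diff:
  assumes "2 * a \<le> n" "2 * b \<le> n" "2 * c \<le> n"
  shows "int (mu n a b c) = hwv_AB_count (int n) (int a) (int b) (int c) - hwv_AB_count (int n) (int a) (int b) (int c - 1)"
proof -
  have "UNIV = insert FC {FA, FB}" using factor_UNIV by auto
  then have "int (mu n a b c) = int (cs.dim (hwv_wrt n (wvec a b c) {FA, FB}))
      - (if c = 0 then 0 else int (cs.dim (hwv_wrt n (wvec a b (c - 1)) {FA, FB})))"
    unfolding mu_eq_dim_hwv_wrt using dim_hwv_wrt_insert[of FC "{FA, FB}" "wvec a b c" n] assms(3)
    by simp
  also have "\<dots> = hwv_AB_count (int n) (int a) (int b) (int c) - hwv_AB_count (int n) (int a) (int b) (int c - 1)"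
    using dim_hwv_wrt_FA_FB[OF assms(1,2), of c] dim_hwv_wrt_FA_FB[OF assms(1,2), of "c - 1"] assms(3)
    by (cases "c = 0") (simp_all add: hwv_AB_count_neg of_nat_diff)
  finally show ?thesis .
qed

lemma hwv_AB_count_diff:
  fixes N a b c :: int
  assumes "0 \<le> a" "0 \<le> b" "2 * a \<le> N" "2 * b \<le> N"
  shows "hwv_AB_count N a b c - hwv_AB_count N a b (c - 1) =
     (\<Sum>k\<in>{0..N}. \<Sum>l\<in>{0..N}. if k + l \<le> min a b \<and> k - l = max a b - c then 1 else 0)
   - (\<Sum>k\<in>{0..N}. \<Sum>l\<in>{0..N}. if k + l \<le> min a b \<and> k - l = N - c + 1 - max a b then 1 else 0)"
proof -
  have "(if (k + l \<le> a \<and> a \<le> N - c - k + l \<and> a \<le> c + k - l)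
          \<and> (k + l \<le> b \<and> b \<le> N - c - k + l \<and> b \<le> c + k - l) then 1 else 0)
     - (if (k + l \<le> a \<and> a \<le> N - (c - 1) - k + l \<and> a \<le> (c - 1) + k - l)
          \<and> (k + l \<le> b \<and> b \<le> N - (c - 1) - k + l \<and> b \<le> (c - 1) + k - l) then 1 else 0)
     = (if k + l \<le> min a b \<and> k - l = max a b - c then 1 else 0)
     - (if k + l \<le> min a b \<and> k - l = N - c + 1 - max a b then 1 else (0::int))"
    if "0 \<le> k" "0 \<le> l" for k l
    using assms that by (smt (z3))
  moreover have "(if P then 1 else 0) * (if Q then 1 else 0) = (if P \<and> Q then 1 else (0::int))"
    for P Q by simp
  ultimately show ?thesis
    unfolding hwv_AB_count_def sum_subtractf[symmetric] by (intro sum.cong refl) auto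
qed

lemma count_diagonal_points:
  fixes A d N :: int
  assumes "0 \<le> A" "A \<le> N"
  shows "(\<Sum>k\<in>{0..N}. \<Sum>l\<in>{0..N}. if k + l \<le> A \<and> k - l = d then 1 else 0 :: int)
         = (if \<bar>d\<bar> \<le> A then (A - \<bar>d\<bar>) div 2 + 1 else 0)"
proof -
  have inner: "(\<Sum>l\<in>{0..N}. if k + l \<le> A \<and> k - l = d then 1 else 0 :: int)
      = (if d \<le> k \<and> k \<le> N + d \<and> 2 * k \<le> A + d then 1 else 0)" for k
  proof -
    have "(\<Sum>l\<in>{0..N}. if k + l \<le> A \<and> k - l = d then 1 else 0 :: int)
        = (\<Sum>l\<in>{0..N}. if l = k - d then (if 2 * k \<le> A + d then 1 else 0) else 0)"
      by (rule sum.cong) auto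
    also have "\<dots> = (if k - d \<in> {0..N} then (if 2 * k \<le> A + d then 1 else 0) else 0)"
      by (rule sum.delta) simp
    finally show ?thesis by auto
  qed
  have "(\<Sum>k\<in>{0..N}. \<Sum>l\<in>{0..N}. if k + l \<le> A \<and> k - l = d then 1 else 0 :: int)
      = (\<Sum>k\<in>{0..N}. if d \<le> k \<and> k \<le> min (N + d) ((A + d) div 2) then 1 else 0)"
    unfolding inner by (rule sum.cong) auto
  also have "\<dots> = max 0 (min N (min (N + d) ((A + d) div 2)) - max 0 d + 1)"
    by (rule sum_indicator_interval)
  also have "\<dots> = (if \<bar>d\<bar> \<le> A then (A - \<bar>d\<bar>) div 2 + 1 else 0)"
  proof -
    define q where "q = (A + d) div 2"
    have q1: "2 * q \<le> A + d" and q2: "A + d \<le> 2 * q + 1" unfolding q_def by linarith+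
    have r: "(A - \<bar>d\<bar>) div 2 = (if 0 \<le> d then q - d else q)"
      unfolding q_def by (auto simp: abs_if)
    show ?thesis unfolding r q_def[symmetric] using q1 q2 assms
      by (cases "0 \<le> d") (simp_all add: max_def min_def)
  qed
  finally show ?thesis .
qed

lemma ceiling_half_eq: "\<lceil>real_of_int s / 2\<rceil> = (s - 1) div 2 + 1"
proof -
  have "- (- s div 2) = (s - 1) div 2 + 1" by presburger
  then show ?thesis using ceiling_divide_eq_div[where 'a = real, of s 2] by simp
qed

lemma mu_closed_form:
  assumes "a \<le> c" "b \<le> c" "2 * c \<le> n"
  shows "int (mu n a b c) = (if c \<le> a + b then (int a + int b - int c) div 2 + 1 else 0)
     - (if n < a + b + c then (int a + int b + int c - int n - 1) div 2 + 1 else 0)"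
proof -
  let ?N = "int n" and ?A = "min (int a) (int b)" and ?B = "max (int a) (int b)"
  have "0 \<le> ?A" "?A \<le> ?N" using assms by auto
  note diagonal = count_diagonal_points[OF this]
  have "int (mu n a b c) = hwv_AB_count ?N (int a) (int b) (int c) - hwv_AB_count ?N (int a) (int b) (int c - 1)"
    by (rule mu_eq_hwv_AB_count_diff) (use assms in auto)
  also have "\<dots> = (\<Sum>k\<in>{0..?N}. \<Sum>l\<in>{0..?N}. if k + l \<le> ?A \<and> k - l = ?B - int c then 1 else 0)
   - (\<Sum>k\<in>{0..?N}. \<Sum>l\<in>{0..?N}. if k + l \<le> ?A \<and> k - l = ?N - int c + 1 - ?B then 1 else 0)"
    by (rule hwv_AB_count_diff) (use assms in auto)
  also have "\<dots> = (if \<bar>?B - int c\<bar> \<le> ?A then (?A - \<bar>?B - int c\<bar>) div 2 + 1 else 0)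
     - (if \<bar>?N - int c + 1 - ?B\<bar> \<le> ?A then (?A - \<bar>?N - int c + 1 - ?B\<bar>) div 2 + 1 else 0)"
    unfolding diagonal ..
  also have "\<bar>?B - int c\<bar> = int c - ?B" using assms by auto
  also have "\<bar>?N - int c + 1 - ?B\<bar> = ?N - int c + 1 - ?B" using assms by auto
  also have "?A - (int c - ?B) = int a + int b - int c" by (simp add: min_def max_def)
  also have "?A - (?N - int c + 1 - ?B) = int a + int b + int c - ?N - 1" by (simp add: min_def max_def)
  also have "(int c - ?B \<le> ?A) = (c \<le> a + b)" by (auto simp: min_def max_def)
  also have "(?N - int c + 1 - ?B \<le> ?A) = (n < a + b + c)" by (auto simp: min_def max_def)
  finally show ?thesis .
qed

theorem lemma6p3:
  fixes n a b c :: nat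
  assumes "a \<le> c" and "b \<le> c" and "2 * c \<le> n"
  shows "(c > a + b \<longrightarrow> mu n a b c = 0)
       \<and> (c \<le> a + b \<and> n \<ge> a + b + c \<longrightarrow>
            int (mu n a b c) = \<lfloor>(real a + real b - real c) / 2\<rfloor> + 1)
       \<and> (c \<le> a + b \<and> n \<le> a + b + c \<longrightarrow>
            int (mu n a b c) = \<lfloor>(real a + real b - real c) / 2\<rfloor>
                               - \<lceil>(real a + real b + real c - real n) / 2\<rceil> + 1)"
proof -
  note mu = mu_closed_form[OF assms]
  have floor: "\<lfloor>(real a + real b - real c) / 2\<rfloor> = (int a + int b - int c) div 2"
    using floor_divide_of_int_eq[of "int a + int b - int c" 2] by simp
  have ceiling: "\<lceil>(real a + real b + real c - real n) / 2\<rceil> = (int a + int b + int c - int n - 1) div 2 + 1"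
    using ceiling_half_eq[of "int a + int b + int c - int n"] by simp
  show ?thesis
    unfolding floor ceiling
  proof (intro conjI impI)
    assume "a + b < c"
    then show "mu n a b c = 0" using mu assms by simp
  next
    assume "c \<le> a + b \<and> a + b + c \<le> n"
    then show "int (mu n a b c) = (int a + int b - int c) div 2 + 1" using mu by simp
  next
    assume "c \<le> a + b \<and> n \<le> a + b + c"
    then show "int (mu n a b c)
        = (int a + int b - int c) div 2 - ((int a + int b + int c - int n - 1) div 2 + 1) + 1"
      using mu by (cases "n = a + b + c") auto
  qed
qed

end
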